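(* Let $G=(Q,\Sigma,\delta_G,q_0,Q_m)$ be a DFA, $\Sigma_o$ a subset of $\Sigma$, and $H:=T_{\Sigma_o}(G)$. Then $match_{\Sigma_o}=eq(G\,\|\,H)$ as binary relations on $\Sigma^*$.
   Context: For a DFA $K$ with initial state $k_0$ and alphabet $\Sigma$, the equiresponse relation $eq(K)$ on $\Sigma^*$ is: $s\equiv s'\bmod eq(K)$ iff $\delta_K(k_0,s)=\delta_K(k_0,s')$, where if $\delta_K(k_0,s)$ is undefined the equality holds iff $\delta_K(k_0,s')$ is also undefined. $P_{\Sigma_o}$ is the natural projection onto $\Sigma_o^*$. The observer $H=T_{\Sigma_o}(G)$ is the DFA over $\Sigma_o$ with subset states, initial state $A_0=\epsilon R_G(q_0)$ (where $\epsilon R_G(q)=\{\delta_G(q,s):P_{\Sigma_o}(s)=\epsilon\}$), transitions $\delta_H(B,\sigma)=\bigcup_{q\in B,\ \delta_G(q,\sigma)\text{ defined}}\epsilon R_G(\delta_G(q,\sigma))$ (defined iff nonempty). $G\,\|\,H$ is the accessible part of the automaton over $\Sigma$ with states $(q,A)$, initial state $(q_0,A_0)$, transitions $((q,A),\sigma)\mapsto(\delta_G(q,\sigma),\delta_H(A,\sigma))$ for $\sigma\in\Sigma_o$ and $((q,A),\sigma)\mapsto(\delta_G(q,\sigma),A)$ for $\sigma\in\Sigma\setminus\Sigma_o$. The relation $match_{\Sigma_o}$ on $\Sigma^*$: $(s,s')\in match_{\Sigma_o}$ iff $s\equiv s'\bmod eq(G)$ and $P_{\Sigma_o}(s)\equiv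 P_{\Sigma_o}(s')\bmod eq(H)$; moreover, if $s\notin L(G)$ then $(s,s')\in match_{\Sigma_o}$ iff $s'\notin L(G)$. *)

theory Defs
  imports Main
begin

record ('q, 'a) dfa =
  states :: "'q set"
  alph   :: "'a set"
  trans  :: "'q \<Rightarrow> 'a \<Rightarrow> 'q option"
  init   :: 'q
  marked :: "'q set"

definition is_dfa :: "('q, 'a) dfa \<Rightarrow> bool" where
  "is_dfa K \<longleftrightarrow> finite (states K) \<and> finite (alph K) \<and> init K \<in> states K
     \<and> marked K \<subseteq> states K
     \<and> (\<forall>q \<sigma> q'. trans K q \<sigma> = Some q' \<longrightarrow> q \<in> states K \<and> \<sigma> \<in> alph K \<and> q' \<in> states K)"

fun ext_trans :: "('q \<Rightarrow> 'a \<Rightarrow> 'q option) \<Rightarrow> 'q \<Rightarrow> 'a list \<Rightarrow> 'q option" where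
  "ext_trans d q [] = Some q"
| "ext_trans d q (a # s) = (case d q a of None \<Rightarrow> None | Some q' \<Rightarrow> ext_trans d q' s)"

definition kleene :: "'a set \<Rightarrow> 'a list set" where
  "kleene A = {s. set s \<subseteq> A}"

definition lang :: "('q, 'a) dfa \<Rightarrow> 'a list set" where
  "lang K = {s \<in> kleene (alph K). ext_trans (trans K) (init K) s \<noteq> None}"

definition eqrel :: "('q, 'a) dfa \<Rightarrow> ('a list \<times> 'a list) set" where
  "eqrel K = {(s, s'). s \<in> kleene (alph K) \<and> s' \<in> kleene (alph K)
      \<and> ext_trans (trans K) (init K) s = ext_trans (trans K) (init K) s'}"

definition proj :: "'a set \<Rightarrow> 'a list \<Rightarrow> 'a list" where
  "proj So s = filter (\<lambda>a. a \<in> So) s"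

definition eps_reach :: "('q, 'a) dfa \<Rightarrow> 'a set \<Rightarrow> 'q \<Rightarrow> 'q set" where
  "eps_reach G So q = {p. \<exists>s \<in> kleene (alph G). proj So s = [] \<and> ext_trans (trans G) q s = Some p}"

definition obs_trans :: "('q, 'a) dfa \<Rightarrow> 'a set \<Rightarrow> 'q set \<Rightarrow> 'a \<Rightarrow> 'q set option" where
  "obs_trans G So B \<sigma> =
     (let U = (\<Union>q \<in> B. case trans G q \<sigma> of None \<Rightarrow> {} | Some p \<Rightarrow> eps_reach G So p)
      in if \<sigma> \<in> So \<and> U \<noteq> {} then Some U else None)"

definition observer :: "('q, 'a) dfa \<Rightarrow> 'a set \<Rightarrow> ('q set, 'a) dfa" where
  "observer G So = \<lparr> states = {B. B \<subseteq> states G}, alph = So, trans = obs_trans G So,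
     init = eps_reach G So (init G), marked = {B. B \<subseteq> states G \<and> B \<inter> marked G \<noteq> {}} \<rparr>"

definition prod_trans :: "('q, 'a) dfa \<Rightarrow> ('p, 'a) dfa \<Rightarrow> 'a set \<Rightarrow> ('q \<times> 'p) \<Rightarrow> 'a \<Rightarrow> ('q \<times> 'p) option" where
  "prod_trans G H So x \<sigma> =
     (case x of (q, A) \<Rightarrow>
        if \<sigma> \<in> So then
          (case (trans G q \<sigma>, trans H A \<sigma>) of (Some q', Some A') \<Rightarrow> Some (q', A') | _ \<Rightarrow> None)
        else if \<sigma> \<in> alph G then
          (case trans G q \<sigma> of Some q' \<Rightarrow> Some (q', A) | None \<Rightarrow> None)
        else None)"

definition prod_reach :: "('q, 'a) dfa \<Rightarrow> ('p, 'a) dfa \<Rightarrow> 'a set \<Rightarrow> ('q \<times> 'p) set" where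
  "prod_reach G H So = {x. \<exists>s \<in> kleene (alph G). ext_trans (prod_trans G H So) (init G, init H) s = Some x}"

definition sync :: "('q, 'a) dfa \<Rightarrow> ('p, 'a) dfa \<Rightarrow> 'a set \<Rightarrow> ('q \<times> 'p, 'a) dfa" where
  "sync G H So = \<lparr> states = prod_reach G H So, alph = alph G,
     trans = (\<lambda>x \<sigma>. if x \<in> prod_reach G H So then prod_trans G H So x \<sigma> else None),
     init = (init G, init H),
     marked = {(q, A) \<in> prod_reach G H So. q \<in> marked G} \<rparr>"

definition match_rel :: "('q, 'a) dfa \<Rightarrow> 'a set \<Rightarrow> ('a list \<times> 'a list) set" where
  "match_rel G So = {(s, s'). s \<in> kleene (alph G) \<and> s' \<in> kleene (alph G) \<and>
      (if s \<notin> lang G then s' \<notin> lang G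
       else (s, s') \<in> eqrel G \<and> (proj So s, proj So s') \<in> eqrel (observer G So))}"

end

theory Submission
  imports Defs
begin

text \<open>The observer state reached along P(s) contains the current state of G and is closed under
  unobservable transitions; this invariant makes the observer component of a run of the product
  defined whenever the G component is, and then it is exactly the observer state reached by P(s).
  Hence the run of G || H on s is undefined iff s is not in L(G), and is otherwise the pair of the
  states of G on s and of H on P(s), which is what match compares.\<close>

abbreviation dfa_run :: "('q, 'a) dfa \<Rightarrow> 'a list \<Rightarrow> 'q option" where
  "dfa_run K s \<equiv> ext_trans (trans K) (init K) s"

definition unobs_closed :: "('q, 'a) dfa \<Rightarrow> 'a set \<Rightarrow> 'q set \<Rightarrow> bool" where
  "unobs_closed G So A \<longleftrightarrow>
     (\<forall>p \<in> A. \<forall>\<sigma> p'. \<sigma> \<in> alph G \<and> \<sigma> \<notin> So \<and> trans G p \<sigma> = Some p' \<longrightarrow> p' \<in> A)"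

lemma ext_trans_append:
  "ext_trans d q (s @ t) = (case ext_trans d q s of None \<Rightarrow> None | Some q' \<Rightarrow> ext_trans d q' t)"
  by (induction s arbitrary: q) (auto split: option.splits)

lemma ext_trans_restrict:
  assumes closed: "\<And>x \<sigma> y. x \<in> R \<Longrightarrow> \<sigma> \<in> \<Sigma> \<Longrightarrow> d x \<sigma> = Some y \<Longrightarrow> y \<in> R"
    and "x \<in> R" and "set s \<subseteq> \<Sigma>"
  shows "ext_trans (\<lambda>x \<sigma>. if x \<in> R then d x \<sigma> else None) x s = ext_trans d x s"
  using assms(2,3)
proof (induction s arbitrary: x)
  case (Cons a s)
  then show ?case using closed by (auto split: option.split)
qed simp

lemma self_in_eps_reach: "q \<in> eps_reach G So q"
  unfolding eps_reach_def kleene_def proj_def by (auto intro: exI[of _ "[]"])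

lemma unobs_closed_eps_reach: "unobs_closed G So (eps_reach G So q)"
  unfolding unobs_closed_def
proof (intro ballI allI impI, elim conjE)
  fix p \<sigma> p'
  assume "p \<in> eps_reach G So q" and \<sigma>: "\<sigma> \<in> alph G" "\<sigma> \<notin> So" "trans G p \<sigma> = Some p'"
  then obtain s where s: "s \<in> kleene (alph G)" "proj So s = []" "ext_trans (trans G) q s = Some p"
    unfolding eps_reach_def by blast
  have "s @ [\<sigma>] \<in> kleene (alph G)" "proj So (s @ [\<sigma>]) = []"
    "ext_trans (trans G) q (s @ [\<sigma>]) = Some p'"
    using s \<sigma> by (auto simp: kleene_def proj_def ext_trans_append)
  then show "p' \<in> eps_reach G So q"
    unfolding eps_reach_def by blast
qed

lemma obs_trans_step:
  assumes "q \<in> A" "\<sigma> \<in> So" "trans G q \<sigma> = Some q'"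
  shows "\<exists>A'. obs_trans G So A \<sigma> = Some A' \<and> q' \<in> A' \<and> unobs_closed G So A'"
proof -
  let ?U = "\<Union>q \<in> A. case trans G q \<sigma> of None \<Rightarrow> {} | Some p \<Rightarrow> eps_reach G So p"
  have "q' \<in> ?U"
    using assms self_in_eps_reach[of q' G So] by force
  moreover have "unobs_closed G So ?U"
    using unobs_closed_eps_reach unfolding unobs_closed_def
    by (fastforce split: option.splits)
  ultimately show ?thesis
    using assms unfolding obs_trans_def Let_def by auto
qed

lemma prod_run_None:
  "ext_trans (trans G) q s = None \<Longrightarrow> ext_trans (prod_trans G H So) (q, A) s = None"
proof (induction s arbitrary: q A)
  case (Cons a s)
  then show ?case
    by (auto simp: prod_trans_def split: option.splits)
qed simp

lemma prod_run_observer: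
  assumes "set s \<subseteq> alph G" "q \<in> A" "unobs_closed G So A"
    and "ext_trans (trans G) q s = Some q'"
  shows "\<exists>A'. ext_trans (obs_trans G So) A (proj So s) = Some A'
           \<and> ext_trans (prod_trans G (observer G So) So) (q, A) s = Some (q', A')"
  using assms
proof (induction s arbitrary: q A)
  case (Cons a s)
  then obtain q1 where q1: "trans G q a = Some q1" "ext_trans (trans G) q1 s = Some q'"
    by (simp split: option.splits)
  show ?case
  proof (cases "a \<in> So")
    case True
    then obtain A1 where A1: "obs_trans G So A a = Some A1" "q1 \<in> A1" "unobs_closed G So A1"
      using obs_trans_step[OF Cons.prems(2) True q1(1)] by blast
    have "prod_trans G (observer G So) So (q, A) a = Some (q1, A1)"
      using True q1(1) A1(1) by (simp add: prod_trans_def observer_def)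
    moreover have "proj So (a # s) = a # proj So s"
      using True by (simp add: proj_def)
    ultimately show ?thesis
      using Cons.IH[of q1 A1] Cons.prems(1) q1(2) A1 by simp
  next
    case False
    then have "q1 \<in> A"
      using Cons.prems q1(1) unfolding unobs_closed_def by auto
    moreover have "prod_trans G (observer G So) So (q, A) a = Some (q1, A)"
      using False q1(1) Cons.prems(1) by (simp add: prod_trans_def)
    moreover have "proj So (a # s) = proj So s"
      using False by (simp add: proj_def)
    ultimately show ?thesis
      using Cons.IH[of q1 A] Cons.prems q1(2) by simp
  qed
qed (simp add: proj_def)

lemma prod_reach_closed:
  assumes "x \<in> prod_reach G H So" "\<sigma> \<in> alph G" "prod_trans G H So x \<sigma> = Some y"
  shows "y \<in> prod_reach G H So"
proof -
  obtain s where "s \<in> kleene (alph G)" "ext_trans (prod_trans G H So) (init G, init H) s = Some x"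
    using assms(1) unfolding prod_reach_def by blast
  then have "s @ [\<sigma>] \<in> kleene (alph G)"
    "ext_trans (prod_trans G H So) (init G, init H) (s @ [\<sigma>]) = Some y"
    using assms(2,3) by (auto simp: kleene_def ext_trans_append)
  then show ?thesis
    unfolding prod_reach_def by blast
qed

lemma sync_run:
  assumes "set s \<subseteq> alph G"
  shows "dfa_run (sync G H So) s = ext_trans (prod_trans G H So) (init G, init H) s"
proof -
  have "(init G, init H) \<in> prod_reach G H So"
    unfolding prod_reach_def kleene_def by (auto intro: exI[of _ "[]"])
  then show ?thesis
    using ext_trans_restrict[OF prod_reach_closed] assms by (simp add: sync_def)
qed

lemma sync_run_None:
  "set s \<subseteq> alph G \<Longrightarrow> dfa_run G s = None \<Longrightarrow> dfa_run (sync G H So) s = None"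
  by (simp add: sync_run prod_run_None)

lemma sync_observer_run_Some:
  assumes "set s \<subseteq> alph G" "dfa_run G s = Some q"
  shows "\<exists>A. dfa_run (observer G So) (proj So s) = Some A
           \<and> dfa_run (sync G (observer G So) So) s = Some (q, A)"
  using prod_run_observer[OF assms(1) self_in_eps_reach unobs_closed_eps_reach assms(2)] assms(1)
  by (simp add: sync_run observer_def)

theorem lemma4:
  fixes G :: "('q, 'a) dfa" and So :: "'a set"
  assumes "is_dfa G" and "So \<subseteq> alph G"
  shows "match_rel G So = eqrel (sync G (observer G So) So)"
proof (intro set_eqI, clarify)
  fix s s'
  let ?H = "observer G So"
  show "(s, s') \<in> match_rel G So \<longleftrightarrow> (s, s') \<in> eqrel (sync G ?H So)"
  proof (cases "set s \<subseteq> alph G \<and> set s' \<subseteq> alph G")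
    case False
    then show ?thesis by (auto simp: match_rel_def eqrel_def sync_def kleene_def)
  next
    case True
    have "proj So s \<in> kleene So" "proj So s' \<in> kleene So"
      by (auto simp: proj_def kleene_def)
    with True show ?thesis
      using sync_run_None[of s G "?H" So] sync_run_None[of s' G "?H" So]
        sync_observer_run_Some[of s G _ So] sync_observer_run_Some[of s' G _ So]
      by (cases "dfa_run G s"; cases "dfa_run G s'")
        (auto simp: match_rel_def eqrel_def sync_def lang_def observer_def kleene_def)
  qed
qed

end
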